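(* Let $n \ge k \ge 2$ be integers, let $B^n$ be the open unit ball in $\mathbb{R}^n$, and fix $y \in B^n$. Define the vector field $W$ on $B^n \setminus \{y\}$ as follows, writing $Q(x) = \frac{1-2\langle x,y\rangle + |y|^2}{|x-y|^2}$ (note $Q(x) \geq 1$ on $B^n\setminus\{y\}$). For $k>2$, \[ W(x) = -\frac{1}{k}\big(Q(x)^{\frac{k}{2}} - 1\big)(x-y) + \frac{1}{k-2}\big(Q(x)^{\frac{k-2}{2}} - 1\big)\, y, \] and for $k=2$, \[ W(x) = -\frac{1}{2}\big(Q(x) - 1\big)(x-y) + \frac{1}{2}\log\big(Q(x)\big)\, y. \] Then for every point $x \in B^n \setminus \{y\}$ and every orthonormal $k$-frame $\{e_1,\dots,e_k\} \subset \mathbb{R}^n$, \[ \sum_{i=1}^k \langle D_{e_i} W, e_i\rangle \leq 1, \] where $D$ denotes the standard directional derivative in $\mathbb{R}^n$. *)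

theory Defs
  imports "HOL-Analysis.Analysis"
begin

definition Qfun :: "'a::euclidean_space \<Rightarrow> 'a \<Rightarrow> real" where
  "Qfun y x = (1 - 2 * (x \<bullet> y) + (norm y)\<^sup>2) / (norm (x - y))\<^sup>2"

definition Wfield :: "nat \<Rightarrow> 'a::euclidean_space \<Rightarrow> 'a \<Rightarrow> 'a" where
  "Wfield k y x =
     (if k = 2 then
        (- (1/2) * (Qfun y x - 1)) *\<^sub>R (x - y) + ((1/2) * ln (Qfun y x)) *\<^sub>R y
      else
        (- (1 / real k) * (Qfun y x powr (real k / 2) - 1)) *\<^sub>R (x - y)
        + ((1 / (real k - 2)) * (Qfun y x powr ((real k - 2) / 2) - 1)) *\<^sub>R y)"

definition dir_deriv :: "('a::real_normed_vector \<Rightarrow> 'b::real_normed_vector) \<Rightarrow> 'a \<Rightarrow> 'a \<Rightarrow> 'b" where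
  "dir_deriv W x e = vector_derivative (\<lambda>t. W (x + t *\<^sub>R e)) (at 0)"

end

theory Submission
  imports Defs
begin

text \<open>
  Write \<open>q = Q(x)\<close>, \<open>r = |x - y|\<^sup>2\<close> and \<open>P = q\<^bsup>k/2-2\<^esup>\<close>. The field has the form
  \<open>W = f(Q) (x - y) + g(Q) y\<close> with profiles satisfying \<open>f' = -P q/2\<close> and \<open>g' = P/2\<close>,
  and
  \<open>D\<^sub>e Q = -2 (\<langle>e,y\<rangle> + q \<langle>x-y,e\<rangle>) / r\<close>. Hence for a unit vector \<open>e\<close>
  \<open>\<langle>D\<^sub>e W, e\<rangle> = f(q) - P (\<langle>e,y\<rangle>\<^sup>2 - q\<^sup>2 \<langle>x-y,e\<rangle>\<^sup>2) / r\<close>.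
  Summing over the frame, dropping the terms \<open>\<langle>e\<^sub>i,y\<rangle>\<^sup>2\<close> and bounding
  \<open>\<Sum> \<langle>x-y,e\<^sub>i\<rangle>\<^sup>2 \<le> r\<close> by Bessel's inequality gives at most
  \<open>k f(q) + P q\<^sup>2 = 1\<close>.
\<close>

definition radial_profile :: "nat \<Rightarrow> real \<Rightarrow> real" where
  "radial_profile k q =
     (if k = 2 then - (1/2) * (q - 1) else - (1 / real k) * (q powr (real k / 2) - 1))"

definition axial_profile :: "nat \<Rightarrow> real \<Rightarrow> real" where
  "axial_profile k q =
     (if k = 2 then (1/2) * ln q else (1 / (real k - 2)) * (q powr ((real k - 2) / 2) - 1))"

lemma Wfield_eq_profiles:
  "Wfield k y z = radial_profile k (Qfun y z) *\<^sub>R (z - y) + axial_profile k (Qfun y z) *\<^sub>R y"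
  by (simp add: Wfield_def radial_profile_def axial_profile_def)

lemma radial_profile_has_real_derivative:
  assumes "2 \<le> k" and "q > 0"
  shows "(radial_profile k has_real_derivative - (1/2) * q powr (real k / 2 - 2) * q) (at q)"
proof (cases "k = 2")
  case True
  then have "radial_profile k = (\<lambda>q. - (1/2) * (q - 1))"
    by (simp add: fun_eq_iff radial_profile_def)
  then show ?thesis
    using True assms(2) by (auto intro!: derivative_eq_intros simp: powr_minus_divide)
next
  case False
  then have "radial_profile k = (\<lambda>q. - (1 / real k) * (q powr (real k / 2) - 1))"
    by (simp add: fun_eq_iff radial_profile_def)
  moreover have "q powr (real k / 2 - 1) = q powr (real k / 2 - 2) * q"
    using powr_mult_base[of q "real k / 2 - 2"] assms(2) by (simp add: mult.commute)
  ultimately show ?thesis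
    using assms by (auto intro!: derivative_eq_intros)
qed

lemma axial_profile_has_real_derivative:
  assumes "2 \<le> k" and "q > 0"
  shows "(axial_profile k has_real_derivative (1/2) * q powr (real k / 2 - 2)) (at q)"
proof (cases "k = 2")
  case True
  then have "axial_profile k = (\<lambda>q. (1/2) * ln q)"
    by (simp add: fun_eq_iff axial_profile_def)
  then show ?thesis
    using True assms(2) by (auto intro!: derivative_eq_intros simp: powr_minus_divide)
next
  case False
  then have "axial_profile k = (\<lambda>q. (1 / (real k - 2)) * (q powr ((real k - 2) / 2) - 1))"
    by (simp add: fun_eq_iff axial_profile_def)
  have "real k - 2 \<noteq> 0"
    using False assms(1) by simp
  then have "1 / (real k - 2) * ((real k - 2) / 2 * q powr ((real k - 2) / 2 - 1) - 0)
      = (1/2) * q powr (real k / 2 - 2)"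
    by (simp add: field_simps)
  moreover have "((\<lambda>q. (1 / (real k - 2)) * (q powr ((real k - 2) / 2) - 1)) has_real_derivative
      1 / (real k - 2) * ((real k - 2) / 2 * q powr ((real k - 2) / 2 - 1) - 0)) (at q)"
    by (intro DERIV_cmult DERIV_diff DERIV_const has_real_derivative_powr assms(2))
  ultimately show ?thesis
    unfolding \<open>axial_profile k = _\<close> by simp
qed

lemma real_mult_radial_profile:
  assumes "2 \<le> k" and "q > 0"
  shows "real k * radial_profile k q = 1 - q powr (real k / 2 - 2) * q\<^sup>2"
proof -
  have "q powr (real k / 2 - 2) * q\<^sup>2 = q powr (real k / 2)"
    using assms(2) by (simp add: powr_add[symmetric] flip: powr_numeral)
  moreover have "q powr 1 = q"
    using assms(2) by simp
  ultimately show ?thesis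
    using assms(1) by (simp add: radial_profile_def right_diff_distrib)
qed

lemma Qfun_gt_one:
  fixes x y :: "'a::euclidean_space"
  assumes "norm x < 1" and "x \<noteq> y"
  shows "Qfun y x > 1"
proof -
  have "1 - 2 * (x \<bullet> y) + (norm y)\<^sup>2 = (norm (x - y))\<^sup>2 + (1 - (norm x)\<^sup>2)"
    unfolding power2_norm_eq_inner by (simp add: inner_diff_left inner_diff_right inner_commute)
  moreover have "(norm x)\<^sup>2 < 1"
    using assms(1) by (simp add: power_less_one_iff)
  moreover have "(norm (x - y))\<^sup>2 > 0"
    using assms(2) by simp
  ultimately show ?thesis
    by (simp add: Qfun_def)
qed

lemma Qfun_along_line:
  fixes x y e :: "'a::euclidean_space"
  shows "Qfun y (x + t *\<^sub>R e) = (1 - 2 * (x \<bullet> y) + (norm y)\<^sup>2 - 2 * t * (e \<bullet> y))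
        / ((norm (x - y))\<^sup>2 + 2 * t * ((x - y) \<bullet> e) + t\<^sup>2 * (e \<bullet> e))"
  unfolding Qfun_def power2_norm_eq_inner
  by (simp add: inner_add_left inner_add_right inner_diff_left inner_diff_right inner_commute
      algebra_simps power2_eq_square)

lemma Qfun_line_has_real_derivative:
  fixes x y e :: "'a::euclidean_space"
  assumes "x \<noteq> y"
  shows "((\<lambda>t. Qfun y (x + t *\<^sub>R e)) has_real_derivative
           - 2 * (e \<bullet> y + Qfun y x * ((x - y) \<bullet> e)) / (norm (x - y))\<^sup>2) (at 0)"
proof -
  define N where "N = 1 - 2 * (x \<bullet> y) + (norm y)\<^sup>2"
  define r where "r = (norm (x - y))\<^sup>2"
  have "r > 0"
    using assms by (simp add: r_def)
  then have "((\<lambda>t. (N - 2 * t * (e \<bullet> y)) / (r + 2 * t * ((x - y) \<bullet> e) + t\<^sup>2 * (e \<bullet> e)))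
      has_real_derivative - 2 * (e \<bullet> y + N / r * ((x - y) \<bullet> e)) / r) (at 0)"
    by (auto intro!: derivative_eq_intros simp: field_simps power2_eq_square)
  then show ?thesis
    unfolding Qfun_along_line by (simp add: Qfun_def N_def r_def)
qed

lemma profile_field_has_vector_derivative:
  fixes x y e :: "'a::euclidean_space"
  defines "Q' \<equiv> - 2 * (e \<bullet> y + Qfun y x * ((x - y) \<bullet> e)) / (norm (x - y))\<^sup>2"
  assumes "x \<noteq> y"
    and "(f has_real_derivative f') (at (Qfun y x))"
    and "(g has_real_derivative g') (at (Qfun y x))"
  shows "((\<lambda>t. f (Qfun y (x + t *\<^sub>R e)) *\<^sub>R (x + t *\<^sub>R e - y) + g (Qfun y (x + t *\<^sub>R e)) *\<^sub>R y)
      has_vector_derivative f (Qfun y x) *\<^sub>R e + (f' * Q') *\<^sub>R (x - y) + (g' * Q') *\<^sub>R y) (at 0)"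
proof -
  let ?Q = "\<lambda>t. Qfun y (x + t *\<^sub>R e)"
  have "(?Q has_real_derivative Q') (at 0)"
    unfolding Q'_def by (rule Qfun_line_has_real_derivative[OF assms(2)])
  then have "((\<lambda>t. f (?Q t)) has_real_derivative f' * Q') (at 0)"
    "((\<lambda>t. g (?Q t)) has_real_derivative g' * Q') (at 0)"
    using DERIV_chain2[of f f' ?Q 0] DERIV_chain2[of g g' ?Q 0] assms(3,4) by simp_all
  then show ?thesis
    by (auto intro!: derivative_eq_intros)
qed

lemma Wfield_line_has_vector_derivative:
  fixes x y e :: "'a::euclidean_space"
  assumes "2 \<le> k" and "x \<noteq> y" and "Qfun y x > 0"
  shows "((\<lambda>t. Wfield k y (x + t *\<^sub>R e)) has_vector_derivative dir_deriv (Wfield k y) x e) (at 0)"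
    and "dir_deriv (Wfield k y) x e \<bullet> e = radial_profile k (Qfun y x) * (e \<bullet> e)
      - Qfun y x powr (real k / 2 - 2) * ((e \<bullet> y)\<^sup>2 - (Qfun y x)\<^sup>2 * ((x - y) \<bullet> e)\<^sup>2)
        / (norm (x - y))\<^sup>2"
proof -
  define q where "q = Qfun y x"
  define P where "P = q powr (real k / 2 - 2)"
  define Q' where "Q' = - 2 * (e \<bullet> y + q * ((x - y) \<bullet> e)) / (norm (x - y))\<^sup>2"
  define V where "V = radial_profile k q *\<^sub>R e + (- (1/2) * P * q * Q') *\<^sub>R (x - y)
    + ((1/2) * P * Q') *\<^sub>R y"
  have "((\<lambda>t. Wfield k y (x + t *\<^sub>R e)) has_vector_derivative V) (at 0)"
    unfolding Wfield_eq_profiles V_def Q'_def P_def q_def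
    by (rule profile_field_has_vector_derivative[OF assms(2)
        radial_profile_has_real_derivative[OF assms(1,3)]
        axial_profile_has_real_derivative[OF assms(1,3)]])
  moreover from this have "dir_deriv (Wfield k y) x e = V"
    unfolding dir_deriv_def by (rule vector_derivative_at)
  ultimately show "((\<lambda>t. Wfield k y (x + t *\<^sub>R e)) has_vector_derivative dir_deriv (Wfield k y) x e) (at 0)"
    by simp
  have "V \<bullet> e = radial_profile k q * (e \<bullet> e)
      + (- (1/2) * P * q * Q') * ((x - y) \<bullet> e) + ((1/2) * P * Q') * (y \<bullet> e)"
    by (simp add: V_def inner_add_left inner_diff_left)
  also have "\<dots> = radial_profile k q * (e \<bullet> e)
      - P * ((e \<bullet> y)\<^sup>2 - q\<^sup>2 * ((x - y) \<bullet> e)\<^sup>2) / (norm (x - y))\<^sup>2"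
    unfolding Q'_def inner_commute[of y e]
    by (simp add: power2_eq_square divide_simps) (simp add: algebra_simps)
  finally show "dir_deriv (Wfield k y) x e \<bullet> e = radial_profile k (Qfun y x) * (e \<bullet> e)
      - Qfun y x powr (real k / 2 - 2) * ((e \<bullet> y)\<^sup>2 - (Qfun y x)\<^sup>2 * ((x - y) \<bullet> e)\<^sup>2)
        / (norm (x - y))\<^sup>2"
    using \<open>dir_deriv (Wfield k y) x e = V\<close> by (simp add: q_def P_def)
qed

lemma orthonormal_sum_inner_square_le:
  fixes d :: "'a::real_inner" and e :: "nat \<Rightarrow> 'a"
  assumes "\<forall>i<k. \<forall>j<k. e i \<bullet> e j = (if i = j then 1 else 0)"
  shows "(\<Sum>i<k. (d \<bullet> e i)\<^sup>2) \<le> d \<bullet> d"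
proof -
  define p where "p = (\<Sum>i<k. (d \<bullet> e i) *\<^sub>R e i)"
  have dp: "d \<bullet> p = (\<Sum>i<k. (d \<bullet> e i)\<^sup>2)"
    by (simp add: p_def inner_sum_right power2_eq_square)
  have "p \<bullet> p = (\<Sum>i<k. \<Sum>j<k. (d \<bullet> e i) * ((d \<bullet> e j) * (e j \<bullet> e i)))"
    by (simp add: p_def inner_sum_left inner_sum_right sum_distrib_left mult.assoc)
  also have "\<dots> = (\<Sum>i<k. \<Sum>j<k. if j = i then (d \<bullet> e i) * (d \<bullet> e j) else 0)"
    using assms by (intro sum.cong) auto
  also have "\<dots> = (\<Sum>i<k. (d \<bullet> e i)\<^sup>2)"
    by (simp add: sum.delta power2_eq_square)
  finally have pp: "p \<bullet> p = (\<Sum>i<k. (d \<bullet> e i)\<^sup>2)" .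
  have "0 \<le> (d - p) \<bullet> (d - p)"
    by simp
  also have "\<dots> = d \<bullet> d - 2 * (d \<bullet> p) + p \<bullet> p"
    by (simp add: inner_diff_left inner_diff_right inner_commute)
  finally show ?thesis
    using dp pp by simp
qed

theorem lemma2p1:
  fixes k :: nat and y x :: "'a::euclidean_space" and e :: "nat \<Rightarrow> 'a"
  assumes "2 \<le> k" and "k \<le> DIM('a)"
    and "y \<in> ball 0 1"
    and "x \<in> ball 0 1" and "x \<noteq> y"
    and "\<forall>i<k. \<forall>j<k. e i \<bullet> e j = (if i = j then 1 else 0)"
  shows "(\<forall>i<k. (\<lambda>t. Wfield k y (x + t *\<^sub>R e i)) differentiable (at 0))
    \<and> (\<Sum>i<k. dir_deriv (Wfield k y) x (e i) \<bullet> e i) \<le> 1"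
proof -
  define q where "q = Qfun y x"
  define r where "r = (norm (x - y))\<^sup>2"
  define P where "P = q powr (real k / 2 - 2)"
  have q: "q > 0" and r: "r > 0"
    using Qfun_gt_one[of x y] assms(4,5) by (simp_all add: q_def r_def)
  note W = Wfield_line_has_vector_derivative[OF assms(1,5) q[unfolded q_def]]
  have "(\<Sum>i<k. dir_deriv (Wfield k y) x (e i) \<bullet> e i)
      = (\<Sum>i<k. radial_profile k q - P / r * (e i \<bullet> y)\<^sup>2 + P * q\<^sup>2 / r * ((x - y) \<bullet> e i)\<^sup>2)"
    using assms(6)
    by (intro sum.cong) (auto simp: W(2) q_def r_def P_def diff_divide_distrib algebra_simps)
  also have "\<dots> \<le> (\<Sum>i<k. radial_profile k q + P * q\<^sup>2 / r * ((x - y) \<bullet> e i)\<^sup>2)"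
    using q r by (intro sum_mono) (simp add: P_def)
  also have "\<dots> = real k * radial_profile k q + P * q\<^sup>2 / r * (\<Sum>i<k. ((x - y) \<bullet> e i)\<^sup>2)"
    by (simp add: sum.distrib sum_distrib_left)
  also have "\<dots> \<le> real k * radial_profile k q + P * q\<^sup>2 / r * r"
    using orthonormal_sum_inner_square_le[OF assms(6), of "x - y"] q
    by (intro add_left_mono mult_left_mono) (simp_all add: r_def P_def power2_norm_eq_inner)
  also have "\<dots> = 1"
    using r real_mult_radial_profile[OF assms(1) q] by (simp add: P_def)
  finally show ?thesis
    using W(1) differentiableI_vector by blast
qed

end
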